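(* Let $\mathbb{k}$ be a field of characteristic $0$ containing a primitive $n$-th root of unity $\omega$, let $H=T_{n^2}(\omega)$ be the Taft Hopf algebra and $A=A_n(\omega)=\mathbb{k}[z]/(z^n-\omega)=\mathbb{k}[u]$, with $u$ the image of $z$. Equip $A$ with the left $H$-module algebra structure determined by $g\cdot u=\omega u$, $x\cdot u=1$, and the left $H$-comodule algebra structure $\rho:A\to H\otimes A$ determined by $\rho(u)=\sum_{i=0}^{n-1}a_i\,x^ig^{-(i+1)}\otimes u^{i+1}$ with $a_i=(\omega-1)^i\omega^{i(i+1)/2}$. Then, for any $n$, $A$ is commutative in the braided category ${}^H_H\mathcal{YD}$, i.e. for all $a,b\in A$, $$ab=\sum (a_{-1}\cdot b)\,a_0,$$ where $\rho(a)=\sum a_{-1}\otimes a_0$.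
   Context: The Taft Hopf algebra is $H=T_{n^2}(\omega)=\mathbb{k}\langle x,g\mid x^n=0,\ g^n=1,\ xg=\omega gx\rangle$ with $\Delta(g)=g\otimes g$, $\Delta(x)=x\otimes 1+g\otimes x$, $\epsilon(g)=1$, $\epsilon(x)=0$. ${}^H_H\mathcal{YD}$ is the category of left-left Yetter–Drinfeld modules over $H$, braided by $\tau(m\otimes n)=\sum(m_{-1}\cdot n)\otimes m_0$; an algebra $A$ in this category is commutative in it if $m_A=m_A\circ\tau$. Module algebra means $h\cdot(ab)=\sum(h_1\cdot a)(h_2\cdot b)$, $h\cdot1=\epsilon(h)1$; comodule algebra means $\rho$ is an algebra map with $(\mathrm{id}\otimes\rho)\rho=(\Delta\otimes\mathrm{id})\rho$. *)

theory Defs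
  imports Main
begin

text \<open>Elements of A = k[u], u^n = omega, are coefficient functions nat => k (coefficient of u^m, m < n).
  Elements of H = T_{n^2}(omega) are coefficient functions nat => nat => k
  (coefficient of the PBW basis element g^i x^j, i, j < n).
  Elements of H (x) A are coefficient functions nat => nat => nat => k
  (coefficient of g^i x^j (x) u^m).\<close>

definition primitive_root_of_unity :: "nat \<Rightarrow> 'k::field \<Rightarrow> bool" where
  "primitive_root_of_unity n \<omega> \<longleftrightarrow> \<omega> ^ n = 1 \<and> (\<forall>k. 0 < k \<and> k < n \<longrightarrow> \<omega> ^ k \<noteq> 1)"

definition uA :: "nat \<Rightarrow> nat \<Rightarrow> 'k::field" where
  "uA k = (\<lambda>m. if m = k then 1 else 0)"

text \<open>Multiplication in A = k[z]/(z^n - omega): u^i u^j = u^(i+j) if i+j<n, = omega u^(i+j-n) otherwise.\<close>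
definition mulA :: "nat \<Rightarrow> 'k::field \<Rightarrow> (nat \<Rightarrow> 'k) \<Rightarrow> (nat \<Rightarrow> 'k) \<Rightarrow> nat \<Rightarrow> 'k" where
  "mulA n \<omega> a b = (\<lambda>m. \<Sum>i<n. \<Sum>j<n.
      if (i + j) mod n = m then a i * b j * (if n \<le> i + j then \<omega> else 1) else 0)"

definition powA :: "nat \<Rightarrow> 'k::field \<Rightarrow> (nat \<Rightarrow> 'k) \<Rightarrow> nat \<Rightarrow> nat \<Rightarrow> 'k" where
  "powA n \<omega> a k = (mulA n \<omega> a ^^ k) (uA 0)"

text \<open>The action of g: algebra automorphism with g.u = omega u, so g.(u^k) = (g.u)^k, extended linearly.\<close>
definition gact :: "nat \<Rightarrow> 'k::field \<Rightarrow> (nat \<Rightarrow> 'k) \<Rightarrow> nat \<Rightarrow> 'k" where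
  "gact n \<omega> a = (\<lambda>m. \<Sum>k<n. a k * powA n \<omega> (\<lambda>l. \<omega> * uA 1 l) k m)"

text \<open>The action of x on the basis u^k, determined by x.1 = 0, x.u = 1 and the module algebra
  rule x.(u u^k) = (x.u) u^k + (g.u)(x.u^k) (since Delta x = x (x) 1 + g (x) x).\<close>
fun xbasis :: "nat \<Rightarrow> 'k::field \<Rightarrow> nat \<Rightarrow> nat \<Rightarrow> 'k" where
  "xbasis n \<omega> 0 = (\<lambda>m. 0)"
| "xbasis n \<omega> (Suc k) = (\<lambda>m. mulA n \<omega> (uA 0) (powA n \<omega> (uA 1) k) m
                          + mulA n \<omega> (\<lambda>l. \<omega> * uA 1 l) (xbasis n \<omega> k) m)"

definition xact :: "nat \<Rightarrow> 'k::field \<Rightarrow> (nat \<Rightarrow> 'k) \<Rightarrow> nat \<Rightarrow> 'k" where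
  "xact n \<omega> a = (\<lambda>m. \<Sum>k<n. a k * xbasis n \<omega> k m)"

definition actH :: "nat \<Rightarrow> 'k::field \<Rightarrow> (nat \<Rightarrow> nat \<Rightarrow> 'k) \<Rightarrow> (nat \<Rightarrow> 'k) \<Rightarrow> nat \<Rightarrow> 'k" where
  "actH n \<omega> h a = (\<lambda>m. \<Sum>i<n. \<Sum>j<n. h i j * ((gact n \<omega> ^^ i) ((xact n \<omega> ^^ j) a)) m)"

definition basisH :: "nat \<Rightarrow> nat \<Rightarrow> nat \<Rightarrow> nat \<Rightarrow> 'k::field" where
  "basisH c e = (\<lambda>i j. if i = c \<and> j = e then 1 else 0)"

text \<open>Multiplication in H: (g^a x^b)(g^c x^d) = omega^(bc) g^(a+c mod n) x^(b+d), with x^(b+d) = 0 if b+d >= n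
  (from x g = omega g x, g^n = 1, x^n = 0).\<close>
definition mulH :: "nat \<Rightarrow> 'k::field \<Rightarrow> (nat \<Rightarrow> nat \<Rightarrow> 'k) \<Rightarrow> (nat \<Rightarrow> nat \<Rightarrow> 'k) \<Rightarrow> nat \<Rightarrow> nat \<Rightarrow> 'k" where
  "mulH n \<omega> h h' = (\<lambda>c e. \<Sum>a<n. \<Sum>b<n. \<Sum>c'<n. \<Sum>d<n.
      if (a + c') mod n = c \<and> b + d = e \<and> e < n then h a b * h' c' d * \<omega> ^ (b * c') else 0)"

definition mulHA :: "nat \<Rightarrow> 'k::field \<Rightarrow> (nat \<Rightarrow> nat \<Rightarrow> nat \<Rightarrow> 'k) \<Rightarrow> (nat \<Rightarrow> nat \<Rightarrow> nat \<Rightarrow> 'k)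
    \<Rightarrow> nat \<Rightarrow> nat \<Rightarrow> nat \<Rightarrow> 'k" where
  "mulHA n \<omega> t t' = (\<lambda>c e m. \<Sum>a<n. \<Sum>b<n. \<Sum>k<n. \<Sum>c'<n. \<Sum>d<n. \<Sum>k'<n.
      if (a + c') mod n = c \<and> b + d = e \<and> e < n \<and> (k + k') mod n = m
      then t a b k * t' c' d k' * \<omega> ^ (b * c') * (if n \<le> k + k' then \<omega> else 1) else 0)"

definition unitHA :: "nat \<Rightarrow> nat \<Rightarrow> nat \<Rightarrow> 'k::field" where
  "unitHA = (\<lambda>i j k. if i = 0 \<and> j = 0 \<and> k = 0 then 1 else 0)"

definition tensorHA :: "(nat \<Rightarrow> nat \<Rightarrow> 'k::field) \<Rightarrow> (nat \<Rightarrow> 'k) \<Rightarrow> nat \<Rightarrow> nat \<Rightarrow> nat \<Rightarrow> 'k" where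
  "tensorHA h a = (\<lambda>i j k. h i j * a k)"

definition xpowH :: "nat \<Rightarrow> nat \<Rightarrow> nat \<Rightarrow> nat \<Rightarrow> 'k::field" where
  "xpowH n i = (\<lambda>a b. if a = 0 \<and> b = i \<and> i < n then 1 else 0)"

definition gpowH :: "nat \<Rightarrow> nat \<Rightarrow> nat \<Rightarrow> nat \<Rightarrow> 'k::field" where
  "gpowH n m = (\<lambda>a b. if a = m mod n \<and> b = 0 then 1 else 0)"

definition taft_coef :: "'k::field \<Rightarrow> nat \<Rightarrow> 'k" where
  "taft_coef \<omega> i = (\<omega> - 1) ^ i * \<omega> ^ (i * (i + 1) div 2)"

text \<open>rho(u) = sum_{i<n} a_i x^i g^{-(i+1)} (x) u^(i+1); note g^{-(i+1)} = g^(n-(i+1)) as g^n = 1.\<close>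
definition rho_u :: "nat \<Rightarrow> 'k::field \<Rightarrow> nat \<Rightarrow> nat \<Rightarrow> nat \<Rightarrow> 'k" where
  "rho_u n \<omega> = (\<lambda>c e m. \<Sum>i<n. taft_coef \<omega> i *
      tensorHA (mulH n \<omega> (xpowH n i) (gpowH n (n - (i + 1)))) (powA n \<omega> (uA 1) (i + 1)) c e m)"

text \<open>The coaction: an algebra map, so rho(u^k) = rho(u)^k, extended linearly.\<close>
definition rhoA :: "nat \<Rightarrow> 'k::field \<Rightarrow> (nat \<Rightarrow> 'k) \<Rightarrow> nat \<Rightarrow> nat \<Rightarrow> nat \<Rightarrow> 'k" where
  "rhoA n \<omega> a = (\<lambda>c e m. \<Sum>k<n. a k * ((mulHA n \<omega> (rho_u n \<omega>) ^^ k) unitHA) c e m)"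

end

theory Submission
  imports Defs
begin

text \<open>Write \<open>\<Phi>(T)(b) = \<Sum> T(c,e,k) (g^c x^e \<cdot> b) u^k\<close> for \<open>T \<in> H \<otimes> A\<close> and \<open>b \<in> A\<close>
  (this is \<open>braid_mult\<close>), so that the claim reads \<open>a b = \<Phi>(\<rho>(a))(b)\<close>. Because the action of
  \<open>H\<close> on \<open>A\<close> respects \<open>x g = \<omega> g x\<close>, \<open>\<Phi>\<close> turns products in \<open>H \<otimes> A\<close> into iterated actions:
  \<open>\<Phi>(S T)(b) = \<Sum> T(c,e,k) \<Phi>(S)(g^c x^e \<cdot> b) u^k\<close>. Hence, if \<open>\<Phi>(S)\<close> is left multiplication
  by \<open>s\<close>, then \<open>\<Phi>(S T) = s \<Phi>(T)\<close>. The one genuine computation is \<open>\<Phi>(\<rho>(u))(b) = u b\<close>;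
  it reduces to the telescoping identity
  \<open>\<Sum>i\<le>q. a_i \<omega>^(-(i+1)q) [q]_\<omega> [q-1]_\<omega> \<cdots> [q-i+1]_\<omega> = 1\<close> for the Taft coefficients.
  As \<open>\<rho>\<close> is multiplicative, induction gives \<open>\<Phi>(\<rho>(u^p))(b) = u^p b\<close>, and linearity in \<open>a\<close>
  finishes the proof.\<close>

declare One_nat_def [simp del] \<comment> \<open>otherwise the generator \<open>uA 1\<close> is rewritten to \<open>uA (Suc 0)\<close>\<close>

lemma sum_if_const_cond: "(\<Sum>x\<in>A. if P then f x else 0) = (if P then sum f A else 0)"
  by simp

lemma sum_lessThan_delta3:
  fixes n :: nat
  shows "(\<Sum>c<n. \<Sum>e<n. \<Sum>k<n. if c = c0 \<and> e = e0 \<and> k = k0 then F c e k else 0)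
     = (if c0 < n \<and> e0 < n \<and> k0 < n then F c0 e0 k0 else 0)"
proof -
  have "(if c = c0 \<and> e = e0 \<and> k = k0 then F c e k else 0) =
      (if c = c0 then if e = e0 then if k = k0 then F c e k else 0 else 0 else 0)" for c e k
    by simp
  then show ?thesis by (simp add: sum_if_const_cond)
qed

lemma sum_move_in2: "(\<Sum>x\<in>A. \<Sum>y\<in>B. \<Sum>z\<in>C. f x y z) = (\<Sum>y\<in>B. \<Sum>z\<in>C. \<Sum>x\<in>A. f x y z)"
  by (subst sum.swap) (rule sum.cong[OF refl], rule sum.swap)

lemma sum_move_in3:
  "(\<Sum>x\<in>A. \<Sum>y\<in>B. \<Sum>z\<in>C. \<Sum>w\<in>D. f x y z w) = (\<Sum>y\<in>B. \<Sum>z\<in>C. \<Sum>w\<in>D. \<Sum>x\<in>A. f x y z w)"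
  by (subst sum.swap) (rule sum.cong[OF refl], rule sum_move_in2)

lemma sum_nested3_cartesian:
  "(\<Sum>x\<in>A. \<Sum>y\<in>B. \<Sum>z\<in>C. f x y z) = (\<Sum>(x, y, z)\<in>A \<times> B \<times> C. f x y z)"
  by (simp add: sum.cartesian_product)

lemma sum_swap_nested3:
  "(\<Sum>x\<in>A. \<Sum>y\<in>B. \<Sum>z\<in>C. \<Sum>u\<in>D. \<Sum>v\<in>E. \<Sum>w\<in>F. f x y z u v w) =
   (\<Sum>u\<in>D. \<Sum>v\<in>E. \<Sum>w\<in>F. \<Sum>x\<in>A. \<Sum>y\<in>B. \<Sum>z\<in>C. f x y z u v w)"
  unfolding sum_nested3_cartesian[where A=A] sum_nested3_cartesian[where A=D] split_def
  by (rule sum.swap)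

lemma power_mod_exp:
  fixes \<omega> :: "'a::monoid_mult"
  assumes "\<omega> ^ n = 1"
  shows "\<omega> ^ (x mod n) = \<omega> ^ x"
proof -
  have "\<omega> ^ x = \<omega> ^ (x mod n) * (\<omega> ^ n) ^ (x div n)"
    by (metis mod_mult_div_eq power_add power_mult)
  then show ?thesis using assms by simp
qed

section \<open>The algebra \<open>A\<close>\<close>

definition supported :: "nat \<Rightarrow> (nat \<Rightarrow> 'k::zero) \<Rightarrow> bool" where
  "supported n f \<longleftrightarrow> (\<forall>k\<ge>n. f k = 0)"

abbreviation upow :: "nat \<Rightarrow> 'k::field \<Rightarrow> nat \<Rightarrow> nat \<Rightarrow> 'k" where
  "upow n \<omega> p \<equiv> powA n \<omega> (uA 1) p"

lemma mulA_comm: "mulA n \<omega> a b = mulA n \<omega> b a"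
  unfolding mulA_def by (subst sum.swap) (intro ext sum.cong refl, simp add: ac_simps)

lemma mulA_smult_left: "mulA n \<omega> (\<lambda>l. c * f l) g = (\<lambda>m. c * mulA n \<omega> f g m)"
  unfolding mulA_def sum_distrib_left by (intro ext sum.cong refl) (auto simp: mult_ac)

lemma mulA_smult_right: "mulA n \<omega> g (\<lambda>l. c * f l) = (\<lambda>m. c * mulA n \<omega> g f m)"
  by (metis mulA_comm mulA_smult_left)

lemma mulA_sum_left: "mulA n \<omega> (\<lambda>l. \<Sum>p\<in>P. f p l) g = (\<lambda>m. \<Sum>p\<in>P. mulA n \<omega> (f p) g m)"
proof
  fix m
  have distr: "(if (i + j) mod n = m then (\<Sum>p\<in>P. f p i) * g j * w else 0)
      = (\<Sum>p\<in>P. if (i + j) mod n = m then f p i * g j * w else 0)" for i j and w :: 'a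
    by (simp add: sum_distrib_right)
  show "mulA n \<omega> (\<lambda>l. \<Sum>p\<in>P. f p l) g m = (\<Sum>p\<in>P. mulA n \<omega> (f p) g m)"
    unfolding mulA_def distr by (rule sum_move_in2[symmetric])
qed

lemma mulA_sum_right: "mulA n \<omega> g (\<lambda>l. \<Sum>p\<in>P. f p l) = (\<lambda>m. \<Sum>p\<in>P. mulA n \<omega> g (f p) m)"
  by (simp add: mulA_comm[of n \<omega> g] mulA_sum_left)

lemma mulA_uA_left:
  assumes "i < n"
  shows "mulA n \<omega> (uA i) b m = (\<Sum>j<n. if (i + j) mod n = m then b j * (if n \<le> i + j then \<omega> else 1) else 0)"
proof -
  have "(if (i' + j) mod n = m then uA i i' * b j * (if n \<le> i' + j then \<omega> else 1) else 0)
      = (if i' = i then (if (i + j) mod n = m then b j * (if n \<le> i + j then \<omega> else 1) else 0) else 0)"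
    for i' j
    by (simp add: uA_def)
  then show ?thesis using assms unfolding mulA_def by (simp add: sum_if_const_cond)
qed

lemma upow_closed:
  assumes "2 \<le> n"
  shows "upow n \<omega> p = (\<lambda>m. if m = p mod n then \<omega> ^ (p div n) else 0)"
proof (induction p)
  case 0
  then show ?case using assms by (simp add: powA_def uA_def fun_eq_iff)
next
  case (Suc p)
  have lt: "p mod n < n" and "1 < n" using assms by simp_all
  have "upow n \<omega> (Suc p) m = (if m = Suc p mod n then \<omega> ^ (Suc p div n) else 0)" for m
  proof -
    have "upow n \<omega> (Suc p) m = mulA n \<omega> (uA 1) (upow n \<omega> p) m"
      by (simp add: powA_def)
    also have "\<dots> = (\<Sum>j<n. if j = p mod n then
        (if Suc j mod n = m then \<omega> ^ (p div n) * (if n \<le> Suc j then \<omega> else 1) else 0) else 0)"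
      unfolding mulA_uA_left[OF \<open>1 < n\<close>] Suc by (intro sum.cong) (auto simp: Suc_eq_plus1_left)
    also have "\<dots> = (if m = Suc p mod n then \<omega> ^ (Suc p div n) else 0)"
      using lt by (cases "Suc (p mod n) = n") (auto simp: mod_Suc div_Suc)
    finally show ?thesis .
  qed
  then show ?case by blast
qed

lemma upow_lt: "2 \<le> n \<Longrightarrow> p < n \<Longrightarrow> upow n \<omega> p = uA p"
  by (simp add: upow_closed fun_eq_iff) (simp add: uA_def)

lemma uA_supported: "k < n \<Longrightarrow> supported n (uA k)"
  by (simp add: supported_def uA_def)

lemma upow_add_mod:
  assumes "2 \<le> n"
  shows "\<omega> ^ (s div n) * upow n \<omega> (s mod n + t) m = upow n \<omega> (s + t) m"
proof -
  have "s + t = (s mod n + t) + n * (s div n)" by simp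
  then have "(s + t) div n = s div n + (s mod n + t) div n" and "(s mod n + t) mod n = (s + t) mod n"
    using assms by (metis div_mult_self2 not_numeral_le_zero, simp add: mod_add_left_eq)
  then show ?thesis using assms by (simp add: upow_closed power_add)
qed

lemma sum_upow_mult:
  assumes "2 \<le> n"
  shows "(\<Sum>j<n. upow n \<omega> p j * upow n \<omega> (j + q) m) = upow n \<omega> (p + q) m"
proof -
  have "(\<Sum>j<n. upow n \<omega> p j * upow n \<omega> (j + q) m)
      = (\<Sum>j<n. if j = p mod n then \<omega> ^ (p div n) * upow n \<omega> (j + q) m else 0)"
    using assms by (intro sum.cong refl) (simp add: upow_closed)
  also have "\<dots> = \<omega> ^ (p div n) * upow n \<omega> (p mod n + q) m"
    using assms by simp
  finally show ?thesis using upow_add_mod[OF assms] by simp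
qed

lemma mulA_closed:
  assumes "2 \<le> n"
  shows "mulA n \<omega> a b m = (\<Sum>i<n. \<Sum>j<n. a i * b j * upow n \<omega> (i + j) m)"
proof -
  have "(if n \<le> i + j then \<omega> else 1) = \<omega> ^ ((i + j) div n)" if "i < n" "j < n" for i j
    using that by (auto simp: div_if)
  then show ?thesis unfolding mulA_def using assms
    by (intro sum.cong refl) (auto simp: upow_closed)
qed

lemma mulA_upow_right:
  assumes "2 \<le> n"
  shows "mulA n \<omega> a (upow n \<omega> q) m = (\<Sum>i<n. a i * upow n \<omega> (i + q) m)"
proof -
  have "(\<Sum>j<n. a i * upow n \<omega> q j * upow n \<omega> (i + j) m) = a i * upow n \<omega> (i + q) m" for i
  proof -
    have "(\<Sum>j<n. a i * upow n \<omega> q j * upow n \<omega> (i + j) m)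
        = a i * (\<Sum>j<n. upow n \<omega> q j * upow n \<omega> (j + i) m)"
      by (simp add: sum_distrib_left mult.assoc add.commute)
    also have "\<dots> = a i * upow n \<omega> (i + q) m"
      by (simp add: sum_upow_mult[OF assms] add.commute)
    finally show ?thesis .
  qed
  then show ?thesis by (simp add: mulA_closed[OF assms])
qed

lemma mulA_mulA_left:
  assumes "2 \<le> n"
  shows "mulA n \<omega> (mulA n \<omega> a b) c m
    = (\<Sum>i<n. \<Sum>k<n. \<Sum>l<n. a i * b k * c l * upow n \<omega> (i + k + l) m)"
proof -
  have "mulA n \<omega> (mulA n \<omega> a b) c m = (\<Sum>j<n. \<Sum>l<n. \<Sum>i<n. \<Sum>k<n.
      a i * b k * c l * (upow n \<omega> (i + k) j * upow n \<omega> (j + l) m))"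
    unfolding mulA_closed[OF assms] by (intro sum.cong refl) (simp only: sum_distrib_right, simp add: mult_ac)
  also have "\<dots> = (\<Sum>i<n. \<Sum>k<n. \<Sum>l<n. \<Sum>j<n.
      a i * b k * c l * (upow n \<omega> (i + k) j * upow n \<omega> (j + l) m))"
    by (rule trans[OF sum_move_in3 sum_move_in2])
  also have "\<dots> = (\<Sum>i<n. \<Sum>k<n. \<Sum>l<n. a i * b k * c l * upow n \<omega> (i + k + l) m)"
    by (simp add: sum_distrib_left[symmetric] sum_upow_mult[OF assms])
  finally show ?thesis .
qed

lemma mulA_assoc:
  assumes "2 \<le> n"
  shows "mulA n \<omega> (mulA n \<omega> a b) c = mulA n \<omega> a (mulA n \<omega> b c)"
proof
  fix m
  have "mulA n \<omega> a (mulA n \<omega> b c) m = mulA n \<omega> (mulA n \<omega> b c) a m"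
    by (simp add: mulA_comm)
  also have "\<dots> = (\<Sum>k<n. \<Sum>l<n. \<Sum>i<n. a i * b k * c l * upow n \<omega> (i + k + l) m)"
    unfolding mulA_mulA_left[OF assms] by (simp add: ac_simps)
  also have "\<dots> = mulA n \<omega> (mulA n \<omega> a b) c m"
    unfolding mulA_mulA_left[OF assms] by (rule sum_move_in2[symmetric])
  finally show "mulA n \<omega> (mulA n \<omega> a b) c m = mulA n \<omega> a (mulA n \<omega> b c) m" ..
qed

lemma mulA_unit_left:
  assumes "0 < n" "supported n b"
  shows "mulA n \<omega> (uA 0) b = b"
proof
  fix m
  show "mulA n \<omega> (uA 0) b m = b m"
    using assms by (cases "m < n") (auto simp: mulA_uA_left supported_def if_distrib[of "\<lambda>x. _ * x"] cong: if_cong)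
qed

lemma mulA_basis_expansion: "mulA n \<omega> a b m = (\<Sum>p<n. a p * mulA n \<omega> (uA p) b m)"
proof -
  have "(\<Sum>p<n. a p * mulA n \<omega> (uA p) b m) = (\<Sum>p<n. \<Sum>j<n.
      if (p + j) mod n = m then a p * b j * (if n \<le> p + j then \<omega> else 1) else 0)"
    by (auto simp: mulA_uA_left sum_distrib_left intro!: sum.cong)
  then show ?thesis by (simp add: mulA_def)
qed

lemma mulA_uA_uA:
  assumes "k < n" "k' < n"
  shows "mulA n \<omega> (uA k) (uA k') = (\<lambda>m. (if n \<le> k + k' then \<omega> else 1) * uA ((k + k') mod n) m)"
proof
  fix m
  have "mulA n \<omega> (uA k) (uA k') m = (\<Sum>j<n. if j = k' then
      (if (k + k') mod n = m then (if n \<le> k + k' then \<omega> else 1) else 0) else 0)"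
    unfolding mulA_uA_left[OF assms(1)] by (intro sum.cong refl) (simp add: uA_def)
  then show "mulA n \<omega> (uA k) (uA k') m = (if n \<le> k + k' then \<omega> else 1) * uA ((k + k') mod n) m"
    using assms(2) by (simp add: uA_def)
qed

section \<open>The action of \<open>H\<close> on \<open>A\<close>\<close>

lemma powA_smult: "powA n \<omega> (\<lambda>l. c * f l) k = (\<lambda>m. c ^ k * powA n \<omega> f k m)"
proof (induction k)
  case (Suc k)
  then show ?case by (simp add: powA_def mulA_smult_left mulA_smult_right mult_ac)
qed (simp add: powA_def)

lemma gact_closed:
  assumes "2 \<le> n"
  shows "gact n \<omega> b = (\<lambda>i. if i < n then \<omega> ^ i * b i else 0)"
proof
  fix m
  have "gact n \<omega> b m = (\<Sum>k<n. if k = m then \<omega> ^ k * b k else 0)"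
    unfolding gact_def powA_smult using assms
    by (intro sum.cong refl) (simp add: upow_lt, simp add: uA_def)
  then show "gact n \<omega> b m = (if m < n then \<omega> ^ m * b m else 0)"
    by simp
qed

definition qint :: "'k::field \<Rightarrow> nat \<Rightarrow> 'k" where
  "qint \<omega> k = (\<Sum>i<k. \<omega> ^ i)"

lemma qint_Suc: "qint \<omega> (Suc k) = 1 + \<omega> * qint \<omega> k"
  unfolding qint_def sum.lessThan_Suc_shift by (simp add: sum_distrib_left)

lemma qint_mult: "(\<omega> - 1) * qint \<omega> k = \<omega> ^ k - 1"
  by (induction k) (simp_all add: qint_Suc qint_def[of \<omega> 0] algebra_simps)

lemma xbasis_closed:
  assumes "2 \<le> n"
  shows "k < n \<Longrightarrow> xbasis n \<omega> k = (\<lambda>m. if Suc m = k then qint \<omega> k else 0)"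
proof (induction k)
  case (Suc k)
  then have k: "k < n" by simp
  have "xbasis n \<omega> (Suc k) m = (if Suc m = Suc k then qint \<omega> (Suc k) else 0)" for m
  proof -
    have "xbasis n \<omega> (Suc k) m = uA k m + \<omega> * mulA n \<omega> (uA 1) (xbasis n \<omega> k) m"
      using assms k by (simp add: upow_lt mulA_unit_left uA_supported mulA_smult_left)
    also have "\<dots> = uA k m + \<omega> * (\<Sum>j<n. if Suc j = k \<and> k = m then qint \<omega> k else 0)"
      using assms k Suc.IH by (auto simp: mulA_uA_left Suc_eq_plus1_left intro!: sum.cong)
    also have "\<dots> = (if Suc m = Suc k then qint \<omega> (Suc k) else 0)"
      using Suc.prems by (cases k) (auto simp: uA_def qint_Suc qint_def[of \<omega> 0])
    finally show ?thesis .
  qed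
  then show ?case by blast
qed simp

lemma xact_closed:
  assumes "2 \<le> n"
  shows "xact n \<omega> b = (\<lambda>i. if Suc i < n then qint \<omega> (Suc i) * b (Suc i) else 0)"
proof
  fix i
  have "xact n \<omega> b i = (\<Sum>k<n. if k = Suc i then b k * qint \<omega> k else 0)"
    unfolding xact_def by (intro sum.cong refl) (auto simp: xbasis_closed[OF assms])
  then show "xact n \<omega> b i = (if Suc i < n then qint \<omega> (Suc i) * b (Suc i) else 0)"
    by (simp add: mult.commute)
qed

definition qfalling :: "'k::field \<Rightarrow> nat \<Rightarrow> nat \<Rightarrow> 'k" where
  "qfalling \<omega> q e = (\<Prod>t<e. qint \<omega> (q - t))"

lemma qfalling_0 [simp]: "qfalling \<omega> q 0 = 1"
  by (simp add: qfalling_def)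

lemma qfalling_Suc: "qfalling \<omega> q (Suc e) = qfalling \<omega> q e * qint \<omega> (q - e)"
  by (simp add: qfalling_def)

lemma qfalling_add: "qfalling \<omega> q (d + e) = qfalling \<omega> q d * qfalling \<omega> (q - d) e"
  by (induction e) (simp_all add: qfalling_Suc diff_diff_add mult.assoc)

definition act_gx :: "nat \<Rightarrow> 'k::field \<Rightarrow> nat \<Rightarrow> nat \<Rightarrow> (nat \<Rightarrow> 'k) \<Rightarrow> nat \<Rightarrow> 'k" where
  "act_gx n \<omega> c e b =
    (\<lambda>i. if i + e < n then \<omega> ^ (c * i) * qfalling \<omega> (i + e) e * b (i + e) else 0)"

lemma act_gx_supported: "supported n (act_gx n \<omega> c e b)"
  by (simp add: supported_def act_gx_def)

lemma gact_iter:
  assumes "2 \<le> n" "supported n b"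
  shows "(gact n \<omega> ^^ c) b = (\<lambda>i. \<omega> ^ (c * i) * b i)"
proof (induction c)
  case (Suc c)
  then show ?case
    using assms by (auto simp: gact_closed supported_def fun_eq_iff power_add mult_ac)
qed simp

lemma xact_iter:
  assumes "2 \<le> n" "supported n b"
  shows "(xact n \<omega> ^^ e) b = (\<lambda>i. if i + e < n then qfalling \<omega> (i + e) e * b (i + e) else 0)"
proof (induction e)
  case 0
  then show ?case using assms by (auto simp: supported_def fun_eq_iff)
next
  case (Suc e)
  have "qfalling \<omega> (i + Suc e) (Suc e) = qfalling \<omega> (Suc i + e) e * qint \<omega> (Suc i)" for i
    by (simp add: qfalling_Suc)
  then show ?case
    using Suc by (auto simp: xact_closed[OF assms(1)] fun_eq_iff mult_ac)
qed

lemma actH_basisH_iter: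
  assumes "c < n" "e < n"
  shows "actH n \<omega> (basisH c e) b = (gact n \<omega> ^^ c) ((xact n \<omega> ^^ e) b)"
proof
  fix m
  have "(if i = c \<and> j = e then 1 else 0) * (gact n \<omega> ^^ i) ((xact n \<omega> ^^ j) b) m
      = (if i = c then if j = e then (gact n \<omega> ^^ i) ((xact n \<omega> ^^ j) b) m else 0 else 0)" for i j
    by simp
  then show "actH n \<omega> (basisH c e) b m = (gact n \<omega> ^^ c) ((xact n \<omega> ^^ e) b) m"
    using assms by (simp add: actH_def basisH_def sum_if_const_cond)
qed

lemma actH_basis_expansion: "actH n \<omega> h b = (\<lambda>m. \<Sum>c<n. \<Sum>e<n. h c e * actH n \<omega> (basisH c e) b m)"
  unfolding actH_def[of n \<omega> h] by (intro ext sum.cong refl) (simp add: actH_basisH_iter)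

lemma actH_basisH:
  assumes "2 \<le> n" "c < n" "e < n" "supported n b"
  shows "actH n \<omega> (basisH c e) b = act_gx n \<omega> c e b"
  using assms
  by (simp add: actH_basisH_iter gact_iter xact_iter supported_def act_gx_def fun_eq_iff mult_ac)


lemma act_gx_act_gx:
  assumes "\<omega> ^ n = 1"
  shows "act_gx n \<omega> a b' (act_gx n \<omega> c' d b) =
    (\<lambda>i. (if b' + d < n then \<omega> ^ (b' * c') else 0) * act_gx n \<omega> ((a + c') mod n) (b' + d) b i)"
proof
  fix i
  show "act_gx n \<omega> a b' (act_gx n \<omega> c' d b) i =
      (if b' + d < n then \<omega> ^ (b' * c') else 0) * act_gx n \<omega> ((a + c') mod n) (b' + d) b i"
  proof (cases "i + b' + d < n")
    case True
    have q: "qfalling \<omega> (i + (b' + d)) (b' + d) = qfalling \<omega> (i + b' + d) d * qfalling \<omega> (i + b') b'"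
      using qfalling_add[of \<omega> "i + (b' + d)" d b'] by (simp add: add.commute add.left_commute)
    have w: "\<omega> ^ ((a + c') mod n * i) = \<omega> ^ ((a + c') * i)"
      by (simp add: power_mult power_mod_exp[OF assms])
    have "\<omega> ^ (a * i) * \<omega> ^ (c' * (i + b')) = \<omega> ^ (b' * c') * \<omega> ^ ((a + c') * i)"
      by (simp add: power_add[symmetric] algebra_simps)
    then show ?thesis
      using True unfolding act_gx_def by (simp add: q w add.assoc)
  next
    case False
    then show ?thesis unfolding act_gx_def by auto
  qed
qed

section \<open>The braided product\<close>

text \<open>Applied to \<open>T = \<rho>(a) = \<Sum> a\<^sub>-\<^sub>1 \<otimes> a\<^sub>0\<close>, this is \<open>\<Sum> (a\<^sub>-\<^sub>1 \<cdot> b) a\<^sub>0\<close>,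
  the product taken in the opposite order through the braiding.\<close>
definition braid_mult :: "nat \<Rightarrow> 'k::field \<Rightarrow> (nat \<Rightarrow> nat \<Rightarrow> nat \<Rightarrow> 'k) \<Rightarrow> (nat \<Rightarrow> 'k) \<Rightarrow> nat \<Rightarrow> 'k"
  where "braid_mult n \<omega> T b = (\<lambda>m. \<Sum>c<n. \<Sum>e<n. \<Sum>k<n.
    T c e k * mulA n \<omega> (actH n \<omega> (basisH c e) b) (uA k) m)"

lemma braid_mult_closed:
  assumes "2 \<le> n" "supported n b"
  shows "braid_mult n \<omega> T b
    = (\<lambda>m. \<Sum>c<n. \<Sum>e<n. \<Sum>k<n. T c e k * mulA n \<omega> (act_gx n \<omega> c e b) (uA k) m)"
  unfolding braid_mult_def using assms by (intro ext sum.cong refl) (simp add: actH_basisH)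

lemma braid_mult_unitHA:
  assumes "2 \<le> n" "supported n b"
  shows "braid_mult n \<omega> unitHA b = b"
proof
  fix m
  have "act_gx n \<omega> 0 0 b = b"
    using assms(2) by (auto simp: act_gx_def supported_def fun_eq_iff)
  moreover have "unitHA c e k * X = (if c = 0 \<and> e = 0 \<and> k = 0 then X else 0)" for c e k and X :: 'a
    by (auto simp: unitHA_def)
  ultimately show "braid_mult n \<omega> unitHA b m = b m"
    using assms by (simp add: braid_mult_closed sum_lessThan_delta3 mulA_comm[of n \<omega> b] mulA_unit_left)
qed

lemma braid_mult_sum:
  "braid_mult n \<omega> (\<lambda>c e k. \<Sum>p\<in>P. f p * T p c e k) b m = (\<Sum>p\<in>P. f p * braid_mult n \<omega> (T p) b m)"
  unfolding braid_mult_def sum_distrib_right sum_distrib_left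
  by (simp add: sum_move_in3[where A=P] mult.assoc)

lemma sum_mulHA:
  assumes "0 < n"
  shows "(\<Sum>c<n. \<Sum>e<n. \<Sum>k<n. mulHA n \<omega> S T c e k * F c e k) =
    (\<Sum>a<n. \<Sum>b<n. \<Sum>k<n. \<Sum>c'<n. \<Sum>d<n. \<Sum>k'<n.
      if b + d < n then S a b k * T c' d k' * \<omega> ^ (b * c') * (if n \<le> k + k' then \<omega> else 1)
        * F ((a + c') mod n) (b + d) ((k + k') mod n)
      else 0)"
proof -
  have delta: "(\<Sum>c<n. \<Sum>e<n. \<Sum>k0<n. if A = c \<and> B = e \<and> e < n \<and> K = k0 then G c e k0 else 0)
      = (if B < n then G A B K else 0)" if "A < n" "K < n" for A B K G
  proof -
    have "(\<Sum>c<n. \<Sum>e<n. \<Sum>k0<n. if A = c \<and> B = e \<and> e < n \<and> K = k0 then G c e k0 else 0)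
        = (\<Sum>c<n. \<Sum>e<n. \<Sum>k0<n. if c = A \<and> e = B \<and> k0 = K then if e < n then G c e k0 else 0 else 0)"
      by (intro sum.cong refl) auto
    then show ?thesis using that by (simp add: sum_lessThan_delta3)
  qed
  have "(\<Sum>c<n. \<Sum>e<n. \<Sum>k<n. mulHA n \<omega> S T c e k * F c e k) =
    (\<Sum>c<n. \<Sum>e<n. \<Sum>k0<n. \<Sum>a<n. \<Sum>b<n. \<Sum>k<n. \<Sum>c'<n. \<Sum>d<n. \<Sum>k'<n.
      if (a + c') mod n = c \<and> b + d = e \<and> e < n \<and> (k + k') mod n = k0
      then S a b k * T c' d k' * \<omega> ^ (b * c') * (if n \<le> k + k' then \<omega> else 1) * F c e k0 else 0)"
    unfolding mulHA_def sum_distrib_right by (simp add: if_distrib[of "\<lambda>x. x * _"] cong: if_cong)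
  also have "\<dots> = (\<Sum>a<n. \<Sum>b<n. \<Sum>k<n. \<Sum>c'<n. \<Sum>d<n. \<Sum>k'<n. \<Sum>c<n. \<Sum>e<n. \<Sum>k0<n.
      if (a + c') mod n = c \<and> b + d = e \<and> e < n \<and> (k + k') mod n = k0
      then S a b k * T c' d k' * \<omega> ^ (b * c') * (if n \<le> k + k' then \<omega> else 1) * F c e k0 else 0)"
    by (rule trans[OF sum_swap_nested3], rule sum.cong[OF refl], rule sum.cong[OF refl],
        rule sum.cong[OF refl], rule sum_swap_nested3)
  also have "\<dots> = (\<Sum>a<n. \<Sum>b<n. \<Sum>k<n. \<Sum>c'<n. \<Sum>d<n. \<Sum>k'<n.
      if b + d < n then S a b k * T c' d k' * \<omega> ^ (b * c') * (if n \<le> k + k' then \<omega> else 1)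
        * F ((a + c') mod n) (b + d) ((k + k') mod n)
      else 0)"
    by (simp only: delta mod_less_divisor[OF assms])
  finally show ?thesis .
qed

lemma mulA_mulA_act_gx_act_gx:
  assumes "2 \<le> n" "\<omega> ^ n = 1" "k < n" "k' < n"
  shows "mulA n \<omega> (mulA n \<omega> (act_gx n \<omega> a b' (act_gx n \<omega> c' d B)) (uA k)) (uA k') m =
    (if b' + d < n then \<omega> ^ (b' * c') else 0) * (if n \<le> k + k' then \<omega> else 1)
       * mulA n \<omega> (act_gx n \<omega> ((a + c') mod n) (b' + d) B) (uA ((k + k') mod n)) m"
  using assms by (simp add: mulA_assoc mulA_uA_uA mulA_smult_right act_gx_act_gx mulA_smult_left)

lemma braid_mult_mulHA:
  assumes "2 \<le> n" "\<omega> ^ n = 1" "supported n b"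
  shows "braid_mult n \<omega> (mulHA n \<omega> S T) b m = (\<Sum>c'<n. \<Sum>d<n. \<Sum>k'<n.
    T c' d k' * mulA n \<omega> (braid_mult n \<omega> S (actH n \<omega> (basisH c' d) b)) (uA k') m)"
proof -
  have "braid_mult n \<omega> (mulHA n \<omega> S T) b m =
    (\<Sum>a<n. \<Sum>b'<n. \<Sum>k<n. \<Sum>c'<n. \<Sum>d<n. \<Sum>k'<n.
      if b' + d < n then S a b' k * T c' d k' * \<omega> ^ (b' * c') * (if n \<le> k + k' then \<omega> else 1)
        * mulA n \<omega> (act_gx n \<omega> ((a + c') mod n) (b' + d) b) (uA ((k + k') mod n)) m
      else 0)"
    using assms(1) by (simp add: braid_mult_closed[OF assms(1,3)] sum_mulHA)
  also have "\<dots> = (\<Sum>a<n. \<Sum>b'<n. \<Sum>k<n. \<Sum>c'<n. \<Sum>d<n. \<Sum>k'<n.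
      S a b' k * T c' d k' * mulA n \<omega> (mulA n \<omega> (act_gx n \<omega> a b' (act_gx n \<omega> c' d b)) (uA k)) (uA k') m)"
    using assms by (intro sum.cong refl) (simp add: mulA_mulA_act_gx_act_gx mult_ac)
  also have "\<dots> = (\<Sum>c'<n. \<Sum>d<n. \<Sum>k'<n. \<Sum>a<n. \<Sum>b'<n. \<Sum>k<n.
      S a b' k * T c' d k' * mulA n \<omega> (mulA n \<omega> (act_gx n \<omega> a b' (act_gx n \<omega> c' d b)) (uA k)) (uA k') m)"
    by (rule sum_swap_nested3)
  also have "\<dots> = (\<Sum>c'<n. \<Sum>d<n. \<Sum>k'<n.
      T c' d k' * mulA n \<omega> (braid_mult n \<omega> S (actH n \<omega> (basisH c' d) b)) (uA k') m)"
    using assms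
    by (intro sum.cong refl) (simp add: actH_basisH braid_mult_closed act_gx_supported mulA_sum_left
        mulA_smult_left sum_distrib_left mult_ac)
  finally show ?thesis .
qed

lemma braid_mult_mulHA_left:
  assumes "2 \<le> n" "\<omega> ^ n = 1" "supported n b"
    and S: "\<And>B. supported n B \<Longrightarrow> braid_mult n \<omega> S B = mulA n \<omega> s B"
  shows "braid_mult n \<omega> (mulHA n \<omega> S T) b = mulA n \<omega> s (braid_mult n \<omega> T b)"
proof
  fix m
  have "braid_mult n \<omega> (mulHA n \<omega> S T) b m = (\<Sum>c<n. \<Sum>e<n. \<Sum>k<n.
      T c e k * mulA n \<omega> s (mulA n \<omega> (actH n \<omega> (basisH c e) b) (uA k)) m)"
    using assms by (simp add: braid_mult_mulHA S actH_basisH act_gx_supported mulA_assoc)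
  also have "\<dots> = mulA n \<omega> s (braid_mult n \<omega> T b) m"
    unfolding braid_mult_def by (simp add: mulA_sum_right mulA_smult_right)
  finally show "braid_mult n \<omega> (mulHA n \<omega> S T) b m = mulA n \<omega> s (braid_mult n \<omega> T b) m" .
qed

section \<open>The coaction of the generator\<close>

lemma taft_coef_Suc: "taft_coef \<omega> (Suc i) = taft_coef \<omega> i * (\<omega> - 1) * \<omega> ^ Suc i"
proof -
  have "Suc i * (Suc i + 1) = i * (i + 1) + 2 * Suc i" by (simp add: algebra_simps)
  then have "Suc i * (Suc i + 1) div 2 = i * (i + 1) div 2 + Suc i"
    by (metis add.commute div_mult_self2 zero_neq_numeral)
  then show ?thesis unfolding taft_coef_def by (simp add: power_add mult_ac)
qed

definition qprod_inv :: "'k::field \<Rightarrow> nat \<Rightarrow> nat \<Rightarrow> 'k" where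
  "qprod_inv \<omega> q i = (\<Prod>t<i. 1 - inverse \<omega> ^ (q - t))"

lemma qprod_inv_Suc: "qprod_inv \<omega> q (Suc i) = qprod_inv \<omega> q i * (1 - inverse \<omega> ^ (q - i))"
  by (simp add: qprod_inv_def)

lemma taft_coef_qfalling:
  fixes \<omega> :: "'k::field"
  assumes "\<omega> \<noteq> 0"
  shows "i \<le> q \<Longrightarrow>
    taft_coef \<omega> i * inverse \<omega> ^ ((i + 1) * q) * qfalling \<omega> q i = inverse \<omega> ^ (q - i) * qprod_inv \<omega> q i"
proof (induction i)
  case 0
  then show ?case by (simp add: taft_coef_def qprod_inv_def)
next
  case (Suc i)
  define v where "v = inverse \<omega>"
  obtain s where qs: "q = Suc i + s" using Suc.prems le_Suc_ex by blast
  have IH: "taft_coef \<omega> i * v ^ ((i + 1) * q) * qfalling \<omega> q i = v ^ Suc s * qprod_inv \<omega> q i"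
    using Suc qs by (simp add: v_def)
  have qi: "q - i = Suc s" using qs by simp
  have cancel: "v ^ k * \<omega> ^ k = 1" "\<omega> ^ k * v ^ k = 1" for k
    using assms by (simp_all add: v_def power_inverse)
  have "taft_coef \<omega> (Suc i) * v ^ ((Suc i + 1) * q) * qfalling \<omega> q (Suc i)
      = (taft_coef \<omega> i * v ^ ((i + 1) * q) * qfalling \<omega> q i) * ((\<omega> - 1) * qint \<omega> (q - i))
        * \<omega> ^ Suc i * v ^ q"
    by (simp add: taft_coef_Suc qfalling_Suc power_add mult_ac)
  also have "\<dots> = v ^ Suc s * qprod_inv \<omega> q i * (\<omega> ^ Suc s - 1) * \<omega> ^ Suc i * (v ^ Suc i * v ^ s)"
    unfolding IH qint_mult qi by (simp add: qs power_add)
  also have "\<dots> = qprod_inv \<omega> q i * v ^ s * (v ^ Suc s * \<omega> ^ Suc s - v ^ Suc s) * (v ^ Suc i * \<omega> ^ Suc i)"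
    by (simp add: algebra_simps)
  also have "\<dots> = v ^ s * (qprod_inv \<omega> q i * (1 - v ^ Suc s))"
    unfolding cancel by (simp add: mult_ac)
  also have "\<dots> = v ^ (q - Suc i) * qprod_inv \<omega> q (Suc i)"
    by (simp add: qprod_inv_Suc qi qs v_def)
  finally show ?case by (simp add: v_def)
qed

lemma root_power_complement:
  fixes \<omega> :: "'k::field"
  assumes "\<omega> ^ n = 1" "i < n"
  shows "\<omega> ^ ((n - (i + 1)) mod n * q) = inverse \<omega> ^ ((i + 1) * q)"
proof -
  have "\<omega> ^ (n - (i + 1)) * \<omega> ^ (i + 1) = 1"
    using assms by (simp add: power_add[symmetric])
  then have "\<omega> ^ (n - (i + 1)) = inverse \<omega> ^ (i + 1)"
    by (metis mult.commute power_inverse inverse_unique)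
  then show ?thesis
    by (simp add: power_mult power_mod_exp[OF assms(1)])
qed

text \<open>The sum telescopes: by \<open>taft_coef_qfalling\<close> its \<open>i\<close>-th term is
  \<open>qprod_inv \<omega> q i - qprod_inv \<omega> q (Suc i)\<close>.\<close>
lemma taft_coef_telescope:
  fixes \<omega> :: "'k::field"
  assumes "\<omega> ^ n = 1" "q < n"
  shows "(\<Sum>i\<le>q. taft_coef \<omega> i * \<omega> ^ ((n - (i + 1)) mod n * q) * qfalling \<omega> q i) = 1"
proof -
  have "\<omega> \<noteq> 0" using assms by (metis not_less0 power_0_left zero_neq_one)
  have "(\<Sum>i\<le>q. taft_coef \<omega> i * \<omega> ^ ((n - (i + 1)) mod n * q) * qfalling \<omega> q i)
      = (\<Sum>i<Suc q. qprod_inv \<omega> q i - qprod_inv \<omega> q (Suc i))"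
  proof (rule sum.cong)
    fix i assume "i \<in> {..<Suc q}"
    then have "i \<le> q" "i < n" using assms by auto
    then show "taft_coef \<omega> i * \<omega> ^ ((n - (i + 1)) mod n * q) * qfalling \<omega> q i
        = qprod_inv \<omega> q i - qprod_inv \<omega> q (Suc i)"
      unfolding root_power_complement[OF assms(1) \<open>i < n\<close>] taft_coef_qfalling[OF \<open>\<omega> \<noteq> 0\<close> \<open>i \<le> q\<close>]
      by (simp add: qprod_inv_Suc algebra_simps)
  qed auto
  also have "\<dots> = 1"
    unfolding sum_lessThan_telescope' by (simp add: qprod_inv_def)
  finally show ?thesis .
qed

lemma sum_lessThan_shift_if:
  fixes g :: "nat \<Rightarrow> 'a::comm_monoid_add"
  shows "(\<Sum>j<n. if j + i < n then g (j + i) else 0) = (\<Sum>q<n. if i \<le> q then g q else 0)"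
proof (cases "i \<le> n")
  case True
  have "(\<Sum>j<n. if j + i < n then g (j + i) else 0) = (\<Sum>j\<in>{0..<n - i}. g (j + i))"
    by (simp add: sum.inter_filter[symmetric] less_diff_conv) (intro sum.cong; auto)
  also have "\<dots> = (\<Sum>q\<in>{i..<n}. g q)"
    using True by (simp add: sum.shift_bounds_nat_ivl[of g 0 i "n - i", symmetric])
  also have "\<dots> = (\<Sum>q<n. if i \<le> q then g q else 0)"
    by (simp add: sum.inter_filter[symmetric]) (intro sum.cong; auto)
  finally show ?thesis .
next
  case False
  then show ?thesis by (intro trans[OF sum.neutral sum.neutral[symmetric]]) auto
qed

lemma mulH_xpowH_gpowH:
  assumes "0 < n" "i < n"
  shows "mulH n \<omega> (xpowH n i) (gpowH n r) = (\<lambda>c e. \<omega> ^ (i * (r mod n)) * basisH (r mod n) i c e)"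
proof (intro ext)
  fix c e
  have "(if (a + c') mod n = c \<and> b + d = e \<and> e < n then xpowH n i a b * gpowH n r c' d * \<omega> ^ (b * c') else 0)
      = (if a = 0 then if b = i then if c' = r mod n then if d = 0 then
           \<omega> ^ (i * (r mod n)) * basisH (r mod n) i c e else 0 else 0 else 0 else 0)" for a b c' d
    using assms by (auto simp: xpowH_def gpowH_def basisH_def)
  then show "mulH n \<omega> (xpowH n i) (gpowH n r) c e = \<omega> ^ (i * (r mod n)) * basisH (r mod n) i c e"
    using assms by (simp add: mulH_def sum_if_const_cond)
qed

lemma actH_smult: "actH n \<omega> (\<lambda>c e. s * h c e) b = (\<lambda>m. s * actH n \<omega> h b m)"
  unfolding actH_def by (simp add: sum_distrib_left mult.assoc)

lemma braid_mult_tensorHA: "braid_mult n \<omega> (tensorHA h a) B = mulA n \<omega> (actH n \<omega> h B) a"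
proof
  fix m
  have "mulA n \<omega> (actH n \<omega> h B) a m = (\<Sum>k<n. a k * mulA n \<omega> (actH n \<omega> h B) (uA k) m)"
    by (simp add: mulA_comm[of n \<omega> _ a] mulA_comm[of n \<omega> _ "uA _"] mulA_basis_expansion[of n \<omega> a])
  also have "\<dots> = (\<Sum>k<n. \<Sum>c<n. \<Sum>e<n. h c e * a k * mulA n \<omega> (actH n \<omega> (basisH c e) B) (uA k) m)"
    unfolding actH_basis_expansion[of n \<omega> h]
    by (simp add: mulA_sum_left mulA_smult_left sum_distrib_left mult_ac)
  also have "\<dots> = braid_mult n \<omega> (tensorHA h a) B m"
    unfolding braid_mult_def tensorHA_def by (rule sum_move_in2)
  finally show "braid_mult n \<omega> (tensorHA h a) B m = mulA n \<omega> (actH n \<omega> h B) a m" ..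
qed

lemma braid_mult_rho_u:
  assumes "2 \<le> n" "\<omega> ^ n = 1" "supported n B"
  shows "braid_mult n \<omega> (rho_u n \<omega>) B = mulA n \<omega> (uA 1) B"
proof
  fix m
  define r where "r i = (n - (i + 1)) mod n" for i
  define \<kappa> where "\<kappa> i q = taft_coef \<omega> i * \<omega> ^ (r i * q) * qfalling \<omega> q i" for i q
  have r: "r i < n" for i
    using assms(1) by (simp add: r_def)
  have "braid_mult n \<omega> (rho_u n \<omega>) B m = (\<Sum>i<n. taft_coef \<omega> i *
      mulA n \<omega> (actH n \<omega> (mulH n \<omega> (xpowH n i) (gpowH n (n - (i + 1)))) B) (upow n \<omega> (i + 1)) m)"
    unfolding rho_u_def by (simp add: braid_mult_sum braid_mult_tensorHA)
  also have "\<dots> = (\<Sum>i<n. \<Sum>j<n.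
      taft_coef \<omega> i * \<omega> ^ (i * r i) * act_gx n \<omega> (r i) i B j * upow n \<omega> (j + (i + 1)) m)"
    using assms r
    by (intro sum.cong refl)
      (simp add: mulH_xpowH_gpowH actH_smult actH_basisH mulA_smult_left mulA_upow_right
        sum_distrib_left mult.assoc flip: r_def)
  also have "\<dots> = (\<Sum>i<n. \<Sum>q<n. if i \<le> q then \<kappa> i q * B q * upow n \<omega> (q + 1) m else 0)"
  proof (rule sum.cong[OF refl])
    fix i
    have "taft_coef \<omega> i * \<omega> ^ (i * r i) * act_gx n \<omega> (r i) i B j * upow n \<omega> (j + (i + 1)) m
        = (if j + i < n then \<kappa> i (j + i) * B (j + i) * upow n \<omega> (j + i + 1) m else 0)" for j
      by (simp add: act_gx_def \<kappa>_def power_add[symmetric] algebra_simps)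
    then show "(\<Sum>j<n. taft_coef \<omega> i * \<omega> ^ (i * r i) * act_gx n \<omega> (r i) i B j * upow n \<omega> (j + (i + 1)) m)
        = (\<Sum>q<n. if i \<le> q then \<kappa> i q * B q * upow n \<omega> (q + 1) m else 0)"
      by (simp add: sum_lessThan_shift_if[where g = "\<lambda>q. \<kappa> i q * B q * upow n \<omega> (q + 1) m"])
  qed
  also have "\<dots> = (\<Sum>q<n. (\<Sum>i\<le>q. \<kappa> i q) * (B q * upow n \<omega> (q + 1) m))"
  proof (subst sum.swap, rule sum.cong[OF refl])
    fix q assume "q \<in> {..<n}"
    then have "{i \<in> {..<n}. i \<le> q} = {..q}" by auto
    then show "(\<Sum>i<n. if i \<le> q then \<kappa> i q * B q * upow n \<omega> (q + 1) m else 0)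
        = (\<Sum>i\<le>q. \<kappa> i q) * (B q * upow n \<omega> (q + 1) m)"
      by (simp add: sum.inter_filter[symmetric] sum_distrib_right mult.assoc)
  qed
  also have "\<dots> = (\<Sum>q<n. B q * upow n \<omega> (q + 1) m)"
    using taft_coef_telescope[OF assms(2)] by (simp add: \<kappa>_def r_def)
  also have "\<dots> = mulA n \<omega> B (upow n \<omega> 1) m"
    by (simp add: mulA_upow_right[OF assms(1)])
  also have "\<dots> = mulA n \<omega> (uA 1) B m"
    using upow_lt[OF assms(1), of 1 \<omega>] assms(1) by (simp add: mulA_comm)
  finally show "braid_mult n \<omega> (rho_u n \<omega>) B m = mulA n \<omega> (uA 1) B m" .
qed

lemma braid_mult_rho_u_power:
  assumes "2 \<le> n" "\<omega> ^ n = 1" "supported n b"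
  shows "braid_mult n \<omega> ((mulHA n \<omega> (rho_u n \<omega>) ^^ p) unitHA) b = mulA n \<omega> (upow n \<omega> p) b"
proof (induction p)
  case 0
  then show ?case
    using assms by (simp add: braid_mult_unitHA powA_def mulA_unit_left)
next
  case (Suc p)
  then show ?case
    using assms by (simp add: braid_mult_mulHA_left braid_mult_rho_u powA_def mulA_assoc)
qed

theorem corollary5p6:
  fixes n :: nat and \<omega> :: "'k::field_char_0" and a b :: "nat \<Rightarrow> 'k"
  assumes "2 \<le> n"
    and "primitive_root_of_unity n \<omega>"
    and "\<forall>k\<ge>n. a k = 0" and "\<forall>k\<ge>n. b k = 0"
  shows "mulA n \<omega> a b =
    (\<lambda>m. \<Sum>c<n. \<Sum>e<n. \<Sum>k<n.
       rhoA n \<omega> a c e k * mulA n \<omega> (actH n \<omega> (basisH c e) b) (uA k) m)"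
proof -
  \<comment> \<open>Only \<open>\<omega> ^ n = 1\<close> and the support of \<open>b\<close> are used: \<open>mulA\<close> and \<open>rhoA\<close> read no
      coefficient of \<open>a\<close> beyond \<open>a (n - 1)\<close>.\<close>
  have w: "\<omega> ^ n = 1"
    using assms(2) by (simp add: primitive_root_of_unity_def)
  have b: "supported n b"
    using assms(4) by (simp add: supported_def)
  have "mulA n \<omega> a b m = braid_mult n \<omega> (rhoA n \<omega> a) b m" for m
  proof -
    have "mulA n \<omega> a b m = (\<Sum>p<n. a p * mulA n \<omega> (upow n \<omega> p) b m)"
      using assms(1) by (simp add: mulA_basis_expansion[of n \<omega> a] upow_lt)
    also have "\<dots> = braid_mult n \<omega> (rhoA n \<omega> a) b m"
      unfolding rhoA_def braid_mult_sum braid_mult_rho_u_power[OF assms(1) w b] ..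
    finally show ?thesis .
  qed
  then show ?thesis
    by (simp add: braid_mult_def fun_eq_iff)
qed

end
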